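(* For $v>0$ and $\tau\in\mathbb R$, \[ |\lambda(\tfrac12+i\tau,v)|\le\min\big(4,\,2\sqrt v/(|\tau|-v)\big)\quad\text{if }|\tau|>v, \] \[ |\Lambda(\tfrac12+i\tau,v)|\le\min\big(4,\,2\sqrt v/(v-|\tau|)\big)\quad\text{if }|\tau|<v. \]
   Context: For $v>0$ and $0<\Re s<1$: $\lambda(s,v)=\int_0^v e^{it}t^{s-1}\,dt$ and $\Lambda(s,v)=\int_v^\infty e^{it}t^{s-1}\,dt$ (improper integral). *)

theory Defs
  imports "HOL-Analysis.Analysis"
begin

definition inc_integrand :: "complex \<Rightarrow> real \<Rightarrow> complex" where
  "inc_integrand s t = exp (\<i> * of_real t) * (of_real t powr (s - 1))"

definition lower_inc :: "complex \<Rightarrow> real \<Rightarrow> complex" where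
  "lower_inc s v = integral {0..v} (inc_integrand s)"

definition upper_inc :: "complex \<Rightarrow> real \<Rightarrow> complex" where
  "upper_inc s v = Lim at_top (\<lambda>T::real. integral {v..T} (inc_integrand s))"

end

theory Submission
  imports Defs "HOL-Real_Asymp.Real_Asymp"
begin

text \<open>
  On the critical line the integrand is \<open>t powr (-1/2) * exp (i * \<phi> t)\<close> with phase
  \<open>\<phi> t = t + \<tau> * ln t\<close>. Since \<open>\<phi>' t = (t + \<tau>) / t\<close>, it equals \<open>g t * \<phi>' t * exp (i * \<phi> t)\<close> for the
  amplitude \<open>g t = sqrt t / (t + \<tau>)\<close>, and one integration by parts bounds its integral over
  \<open>[a, b]\<close> by \<open>|g a| + |g b| + |g b - g a|\<close> as long as \<open>g\<close> is monotone there, i.e. \<open>\<tau> \<notin> (a, b)\<close>.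
  Below \<open>|\<tau>|\<close> the amplitude is at most \<open>sqrt v / (|\<tau>| - v)\<close>, above it at most
  \<open>sqrt v / (v - |\<tau>|)\<close>, which gives the second bounds (for \<open>\<lambda>\<close> after letting the lower limit tend
  to 0, for \<open>\<Lambda>\<close> together with the convergence of the improper integral). For the bound 4 split
  at \<open>(sqrt v \<mp> 1)\<^sup>2\<close>: the piece next to \<open>v\<close> contributes at most 2 by the trivial estimate
  \<open>2 * sqrt b - 2 * sqrt a\<close>, the other piece at most 2 by integration by parts.
\<close>

lemma norm_integral_oscillatory_le:
  fixes g dg \<phi> d\<phi> :: "real \<Rightarrow> real"
  assumes "a \<le> b"
    and g: "\<And>t. t \<in> {a..b} \<Longrightarrow> (g has_real_derivative dg t) (at t within {a..b})"
    and \<phi>: "\<And>t. t \<in> {a..b} \<Longrightarrow> (\<phi> has_real_derivative d\<phi> t) (at t within {a..b})"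
    and "continuous_on {a..b} dg"
    and sign: "(\<forall>t\<in>{a..b}. 0 \<le> dg t) \<or> (\<forall>t\<in>{a..b}. dg t \<le> 0)"
  defines "f \<equiv> \<lambda>t. of_real (g t * d\<phi> t) * exp (\<i> * of_real (\<phi> t))"
  shows "f integrable_on {a..b}"
    and "norm (integral {a..b} f) \<le> \<bar>g a\<bar> + \<bar>g b\<bar> + \<bar>g b - g a\<bar>"
proof -
  define E where "E t = exp (\<i> * of_real (\<phi> t))" for t
  define G where "G t = - \<i> * of_real (g t) * E t" for t
  define R where "R t = \<i> * of_real (dg t) * E t" for t
  have "(G has_vector_derivative f t - R t) (at t within {a..b})" if t: "t \<in> {a..b}" for t
  proof -
    have "((\<lambda>t. \<i> * of_real (\<phi> t)) has_vector_derivative \<i> * of_real (d\<phi> t)) (at t within {a..b})"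
      using has_vector_derivative_mult[OF has_vector_derivative_const
          has_vector_derivative_of_real[OF \<phi>[OF t]]] by simp
    from field_vector_diff_chain_within[OF this DERIV_exp[THEN has_field_derivative_at_within]]
    have "(E has_vector_derivative \<i> * of_real (d\<phi> t) * E t) (at t within {a..b})"
      unfolding E_def o_def by simp
    from has_vector_derivative_mult[OF has_vector_derivative_mult[OF has_vector_derivative_const[of "- \<i>"]
            has_vector_derivative_of_real[OF g[OF t]]] this]
    show ?thesis
      unfolding G_def f_def R_def E_def by (simp add: algebra_simps)
  qed
  then have G: "((\<lambda>t. f t - R t) has_integral G b - G a) {a..b}"
    by (rule fundamental_theorem_of_calculus[OF \<open>a \<le> b\<close>])
  have "continuous_on {a..b} \<phi>"
    using \<phi> by (rule DERIV_continuous_on)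
  then have R: "R integrable_on {a..b}"
    unfolding R_def E_def
    by (intro integrable_continuous_interval continuous_intros \<open>continuous_on {a..b} dg\<close>)
  have f_eq: "f = (\<lambda>t. (f t - R t) + R t)" by simp
  show "f integrable_on {a..b}"
    by (subst f_eq, rule integrable_add[OF has_integral_integrable[OF G] R])
  have "integral {a..b} f = (G b - G a) + integral {a..b} R"
    by (subst f_eq, subst integral_add[OF has_integral_integrable[OF G] R]) (simp add: integral_unique[OF G])
  also have "norm \<dots> \<le> norm (G b) + norm (G a) + norm (integral {a..b} R)"
    by (rule order_trans[OF norm_triangle_ineq add_right_mono[OF norm_triangle_ineq4]])
  also have "norm (integral {a..b} R) \<le> \<bar>g b - g a\<bar>"
  proof -
    obtain s :: real where s: "\<And>t. t \<in> {a..b} \<Longrightarrow> \<bar>dg t\<bar> = s * dg t" "\<bar>s\<bar> = 1"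
      using sign by (metis abs_of_nonneg abs_of_nonpos abs_one abs_minus_cancel mult_1 mult_minus1)
    have "((\<lambda>t. s * dg t) has_integral s * (g b - g a)) {a..b}"
      by (intro has_integral_mult_right fundamental_theorem_of_calculus[OF \<open>a \<le> b\<close>])
         (simp add: g has_real_derivative_iff_has_vector_derivative[symmetric])
    then have abs_dg: "((\<lambda>t. \<bar>dg t\<bar>) has_integral s * (g b - g a)) {a..b}"
      by (rule has_integral_eq[rotated]) (simp add: s)
    have "norm (integral {a..b} R) \<le> integral {a..b} (\<lambda>t. \<bar>dg t\<bar>)"
      by (rule integral_norm_bound_integral[OF R has_integral_integrable[OF abs_dg]])
         (simp add: R_def E_def norm_mult)
    also have "\<dots> = s * (g b - g a)"
      using abs_dg by (rule integral_unique)
    also have "\<dots> \<le> \<bar>g b - g a\<bar>"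
      using abs_ge_self[of "s * (g b - g a)"] s(2) by (simp add: abs_mult)
    finally show ?thesis .
  qed
  finally show "norm (integral {a..b} f) \<le> \<bar>g a\<bar> + \<bar>g b\<bar> + \<bar>g b - g a\<bar>"
    by (simp add: G_def E_def norm_mult)
qed

lemma abs_add_abs_add_abs_diff_le:
  fixes x y M :: real
  assumes "\<bar>x\<bar> \<le> M" "\<bar>y\<bar> \<le> M" "0 \<le> x * y"
  shows "\<bar>x\<bar> + \<bar>y\<bar> + \<bar>y - x\<bar> \<le> 2 * M"
  using assms by (auto simp: zero_le_mult_iff)

lemma sqrt_divide_add_le:
  fixes \<tau> a t :: real
  assumes "\<bar>\<tau>\<bar> < a" "a \<le> t"
  shows "sqrt t / (t + \<tau>) \<le> sqrt a / (a - \<bar>\<tau>\<bar>)"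
proof -
  define x y where "x = sqrt a" and "y = sqrt t"
  have xy: "0 < x" "x \<le> y" "x * x = a" "y * y = t"
    using assms unfolding x_def y_def by (auto intro: real_sqrt_le_mono)
  have "x * (t - \<bar>\<tau>\<bar>) - y * (a - \<bar>\<tau>\<bar>) = (y - x) * (x * y + \<bar>\<tau>\<bar>)"
    unfolding xy(3,4)[symmetric] by (simp add: algebra_simps)
  also have "\<dots> \<ge> 0"
    using xy by simp
  finally have "y * (a - \<bar>\<tau>\<bar>) \<le> x * (t - \<bar>\<tau>\<bar>)"
    by simp
  then have "y / (t - \<bar>\<tau>\<bar>) \<le> x / (a - \<bar>\<tau>\<bar>)"
    using assms by (simp add: field_simps)
  moreover have "y / (t + \<tau>) \<le> y / (t - \<bar>\<tau>\<bar>)"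
    using assms xy by (intro divide_left_mono) auto
  ultimately show ?thesis
    unfolding x_def y_def by linarith
qed

lemma has_integral_inverse_sqrt:
  fixes a b :: real
  assumes "0 \<le> a" "a \<le> b"
  shows "((\<lambda>t. 1 / sqrt t) has_integral 2 * sqrt b - 2 * sqrt a) {a..b}"
proof (rule fundamental_theorem_of_calculus_interior[OF \<open>a \<le> b\<close>])
  show "continuous_on {a..b} (\<lambda>t. 2 * sqrt t)"
    by (intro continuous_intros)
  fix t assume "t \<in> {a<..<b}"
  then have "t > 0" using assms by auto
  then have "((\<lambda>t. 2 * sqrt t) has_real_derivative 1 / sqrt t) (at t)"
    by (auto intro!: derivative_eq_intros simp: field_simps)
  then show "((\<lambda>t. 2 * sqrt t) has_vector_derivative 1 / sqrt t) (at t)"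
    by (simp add: has_real_derivative_iff_has_vector_derivative)
qed

lemma convergent_integral_at_top:
  fixes f :: "real \<Rightarrow> 'a::banach"
  assumes integrable: "\<And>T. a \<le> T \<Longrightarrow> f integrable_on {a..T}"
    and tail: "\<And>M T. a \<le> M \<Longrightarrow> M \<le> T \<Longrightarrow> norm (integral {M..T} f) \<le> B M"
    and "(B \<longlongrightarrow> 0) at_top"
  shows "\<exists>L. ((\<lambda>T. integral {a..T} f) \<longlongrightarrow> L) at_top"
proof -
  define F where "F T = integral {a..T} f" for T
  have "cauchy_filter (filtermap F at_top)"
    unfolding cauchy_filter_metric_filtermap
  proof (intro allI impI)
    fix e :: real
    assume "e > 0"
    then have "\<forall>\<^sub>F M in at_top. B M < e / 2"
      using \<open>(B \<longlongrightarrow> 0) at_top\<close> by (intro order_tendstoD(2)) auto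
    then have "\<forall>\<^sub>F M in at_top. a \<le> M \<and> B M < e / 2"
      using eventually_ge_at_top[of a] by eventually_elim auto
    then obtain M where M: "a \<le> M" "B M < e / 2"
      by (auto simp: eventually_at_top_linorder)
    have split: "F x = integral {a..M} f + integral {M..x} f" if "M \<le> x" for x
      unfolding F_def using M(1) that
      by (intro Henstock_Kurzweil_Integration.integral_combine[symmetric] integrable) auto
    have "dist (F x) (F y) < e" if "M \<le> x" "M \<le> y" for x y
    proof -
      have "F x - F y = integral {M..x} f - integral {M..y} f"
        using split that by simp
      then have "dist (F x) (F y) \<le> norm (integral {M..x} f) + norm (integral {M..y} f)"
        by (simp add: dist_norm norm_triangle_ineq4)
      also have "\<dots> \<le> B M + B M"
        using M that by (intro add_mono tail) auto
      finally show ?thesis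
        using M by linarith
    qed
    then show "\<exists>P. eventually P at_top \<and> (\<forall>x y. P x \<and> P y \<longrightarrow> dist (F x) (F y) < e)"
      by (intro exI[of _ "\<lambda>x. M \<le> x"]) (auto intro: eventually_ge_at_top)
  qed
  moreover have "filtermap F at_top \<noteq> bot"
    by (simp add: filtermap_bot_iff)
  ultimately obtain L where "filtermap F at_top \<le> nhds L"
    using cauchy_filter_complete_converges[OF _ complete_UNIV] by auto
  then show ?thesis
    unfolding F_def filterlim_def by blast
qed

abbreviation critical_integrand :: "real \<Rightarrow> real \<Rightarrow> complex" where
  "critical_integrand \<tau> \<equiv> inc_integrand (1/2 + \<i> * of_real \<tau>)"

lemma critical_integrand_eq:
  assumes "t > 0"
  shows "critical_integrand \<tau> t = of_real (1 / sqrt t) * exp (\<i> * of_real (t + \<tau> * ln t))"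
proof -
  have "critical_integrand \<tau> t = exp (of_real (- (ln t / 2)) + \<i> * of_real (t + \<tau> * ln t))"
    using assms by (simp add: inc_integrand_def powr_def Ln_of_real flip: exp_add) (simp add: algebra_simps)
  moreover have "exp (of_real (- (ln t / 2))) = (of_real (1 / sqrt t) :: complex)"
    using assms by (simp add: exp_minus powr_half_sqrt[symmetric] powr_def inverse_eq_divide flip: exp_of_real)
  ultimately show ?thesis by (simp only: exp_add)
qed

lemma norm_critical_integrand_le:
  assumes "t \<ge> 0"
  shows "norm (critical_integrand \<tau> t) \<le> 1 / sqrt t"
proof (cases "t = 0")
  case False
  with assms show ?thesis by (simp add: critical_integrand_eq norm_mult norm_divide)
qed (simp add: inc_integrand_def)

lemma critical_integrand_integrable:
  assumes "0 \<le> a" "a \<le> b"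
  shows "critical_integrand \<tau> integrable_on {a..b}"
proof -
  have "continuous_on {a<..<b} (\<lambda>t. of_real (1 / sqrt t) * exp (\<i> * of_real (t + \<tau> * ln t)))"
    using assms by (intro continuous_intros) auto
  then have "continuous_on {a<..<b} (critical_integrand \<tau>)"
    by (rule continuous_on_eq) (use assms in \<open>simp add: critical_integrand_eq\<close>)
  then have "critical_integrand \<tau> \<in> borel_measurable (lebesgue_on {a<..<b})"
    by (rule continuous_imp_measurable_on_sets_lebesgue) simp
  moreover have "(\<lambda>t. 1 / sqrt t) integrable_on {a<..<b}"
    using has_integral_inverse_sqrt[OF assms] integrable_on_open_interval_real by blast
  ultimately have "critical_integrand \<tau> integrable_on {a<..<b}"
    by (rule measurable_bounded_by_integrable_imp_integrable)
       (use assms in \<open>auto intro: norm_critical_integrand_le\<close>)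
  then show ?thesis
    by (simp add: integrable_on_open_interval_real)
qed

lemma integral_critical_combine:
  assumes "0 \<le> a" "a \<le> c" "c \<le> b"
  shows "integral {a..b} (critical_integrand \<tau>)
    = integral {a..c} (critical_integrand \<tau>) + integral {c..b} (critical_integrand \<tau>)"
  using assms
  by (intro Henstock_Kurzweil_Integration.integral_combine[symmetric] critical_integrand_integrable) auto

lemma norm_integral_critical_le_sqrt:
  assumes "0 \<le> a" "a \<le> b"
  shows "norm (integral {a..b} (critical_integrand \<tau>)) \<le> 2 * sqrt b - 2 * sqrt a"
proof -
  have "norm (integral {a..b} (critical_integrand \<tau>)) \<le> integral {a..b} (\<lambda>t. 1 / sqrt t)"
    using assms
    by (intro integral_norm_bound_integral critical_integrand_integrable
          has_integral_integrable[OF has_integral_inverse_sqrt] norm_critical_integrand_le) auto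
  then show ?thesis
    by (simp add: integral_unique[OF has_integral_inverse_sqrt[OF assms]])
qed

lemma norm_integral_critical_le_amplitude:
  assumes "0 < a" "a \<le> b" "- \<tau> \<notin> {a..b}" "b \<le> \<tau> \<or> \<tau> \<le> a"
  defines "g \<equiv> \<lambda>t. sqrt t / (t + \<tau>)"
  shows "norm (integral {a..b} (critical_integrand \<tau>)) \<le> \<bar>g a\<bar> + \<bar>g b\<bar> + \<bar>g b - g a\<bar>"
proof -
  define dg where "dg t = (\<tau> - t) / (2 * sqrt t * (t + \<tau>)\<^sup>2)" for t
  have t: "t > 0" "t + \<tau> \<noteq> 0" if "t \<in> {a..b}" for t
    using assms(1,3) that by auto
  have "(g has_real_derivative dg t) (at t within {a..b})" if "t \<in> {a..b}" for t
  proof -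
    have "sqrt t * sqrt t = t" using t[OF that] by simp
    with t[OF that] show ?thesis
      unfolding g_def dg_def
      by (auto intro!: derivative_eq_intros simp: field_simps power2_eq_square)
  qed
  moreover have "((\<lambda>t. t + \<tau> * ln t) has_real_derivative 1 + \<tau> / t) (at t within {a..b})"
    if "t \<in> {a..b}" for t
    using t[OF that] by (auto intro!: derivative_eq_intros)
  moreover have "continuous_on {a..b} dg"
    unfolding dg_def using t \<open>0 < a\<close> by (intro continuous_intros) auto
  moreover have "(\<forall>t\<in>{a..b}. 0 \<le> dg t) \<or> (\<forall>t\<in>{a..b}. dg t \<le> 0)"
    using assms(1,4) by (auto simp: dg_def intro!: divide_nonneg_nonneg divide_nonpos_nonneg)
  ultimately have "norm (integral {a..b} (\<lambda>t. of_real (g t * (1 + \<tau> / t)) * exp (\<i> * of_real (t + \<tau> * ln t))))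
      \<le> \<bar>g a\<bar> + \<bar>g b\<bar> + \<bar>g b - g a\<bar>"
    by (rule norm_integral_oscillatory_le(2)[OF \<open>a \<le> b\<close>])
  moreover have "g t * (1 + \<tau> / t) = 1 / sqrt t" if "t \<in> {a..b}" for t
  proof -
    have "1 + \<tau> / t = (t + \<tau>) / t" "sqrt t / t = 1 / sqrt t"
      using t[OF that] by (simp_all add: field_simps sqrt_divide_self_eq)
    with t[OF that] show ?thesis
      unfolding g_def by simp
  qed
  ultimately show ?thesis
    by (metis (no_types, lifting) critical_integrand_eq integral_cong t(1))
qed

lemma norm_integral_critical_le_below:
  assumes "0 < a" "a \<le> b" "b < \<bar>\<tau>\<bar>"
  shows "norm (integral {a..b} (critical_integrand \<tau>)) \<le> 2 * sqrt b / (\<bar>\<tau>\<bar> - b)"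
proof -
  define g where "g t = sqrt t / (t + \<tau>)" for t
  have bound: "\<bar>g t\<bar> \<le> sqrt b / (\<bar>\<tau>\<bar> - b)" if "0 < t" "t \<le> b" for t
    unfolding g_def abs_divide using assms that by (intro frac_le) auto
  have "0 \<le> g a * g b"
  proof (cases "\<tau> \<ge> 0")
    case False
    with assms have "g a \<le> 0" "g b \<le> 0"
      by (auto simp: g_def intro!: divide_nonneg_neg)
    then show ?thesis
      by (rule mult_nonpos_nonpos)
  qed (use assms in \<open>simp add: g_def\<close>)
  then have "\<bar>g a\<bar> + \<bar>g b\<bar> + \<bar>g b - g a\<bar> \<le> 2 * (sqrt b / (\<bar>\<tau>\<bar> - b))"
    using assms by (intro abs_add_abs_add_abs_diff_le bound) auto
  moreover have "norm (integral {a..b} (critical_integrand \<tau>)) \<le> \<bar>g a\<bar> + \<bar>g b\<bar> + \<bar>g b - g a\<bar>"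
    unfolding g_def using assms by (intro norm_integral_critical_le_amplitude) auto
  ultimately show ?thesis
    by simp
qed

lemma norm_integral_critical_le_above:
  assumes "\<bar>\<tau>\<bar> < a" "a \<le> b"
  shows "norm (integral {a..b} (critical_integrand \<tau>)) \<le> 2 * sqrt a / (a - \<bar>\<tau>\<bar>)"
proof -
  define g where "g t = sqrt t / (t + \<tau>)" for t
  have g: "0 \<le> g t" "\<bar>g t\<bar> \<le> sqrt a / (a - \<bar>\<tau>\<bar>)" if "a \<le> t" for t
    using assms that sqrt_divide_add_le[of \<tau> a t] by (auto simp: g_def)
  have "\<bar>g a\<bar> + \<bar>g b\<bar> + \<bar>g b - g a\<bar> \<le> 2 * (sqrt a / (a - \<bar>\<tau>\<bar>))"
    using assms g by (intro abs_add_abs_add_abs_diff_le) auto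
  moreover have "norm (integral {a..b} (critical_integrand \<tau>)) \<le> \<bar>g a\<bar> + \<bar>g b\<bar> + \<bar>g b - g a\<bar>"
    unfolding g_def using assms by (intro norm_integral_critical_le_amplitude) auto
  ultimately show ?thesis
    by simp
qed

lemma norm_integral_critical_from_zero_le:
  assumes "0 < b" "b < \<bar>\<tau>\<bar>"
  shows "norm (integral {0..b} (critical_integrand \<tau>)) \<le> 2 * sqrt b / (\<bar>\<tau>\<bar> - b)"
proof (rule tendsto_lowerbound)
  \<comment> \<open>integration by parts needs a positive lower limit, so cut off \<open>[0, e]\<close> and let \<open>e \<rightarrow> 0\<close>\<close>
  show "((\<lambda>e. 2 * sqrt e + 2 * sqrt b / (\<bar>\<tau>\<bar> - b)) \<longlongrightarrow> 2 * sqrt b / (\<bar>\<tau>\<bar> - b)) (at_right 0)"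
    by (auto intro!: tendsto_eq_intros)
  have "norm (integral {0..b} (critical_integrand \<tau>)) \<le> 2 * sqrt e + 2 * sqrt b / (\<bar>\<tau>\<bar> - b)"
    if "0 < e" "e < b" for e
  proof -
    have "integral {0..b} (critical_integrand \<tau>)
        = integral {0..e} (critical_integrand \<tau>) + integral {e..b} (critical_integrand \<tau>)"
      using that by (intro integral_critical_combine) auto
    also have "norm \<dots> \<le> (2 * sqrt e - 2 * sqrt 0) + 2 * sqrt b / (\<bar>\<tau>\<bar> - b)"
      using that assms
      by (intro norm_triangle_le add_mono norm_integral_critical_le_sqrt norm_integral_critical_le_below) auto
    finally show ?thesis by simp
  qed
  then show "\<forall>\<^sub>F e in at_right 0. norm (integral {0..b} (critical_integrand \<tau>)) \<le> 2 * sqrt e + 2 * sqrt b / (\<bar>\<tau>\<bar> - b)"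
    using \<open>0 < b\<close> by (auto simp: eventually_at_right_field)
qed simp

lemma norm_integral_critical_from_zero_le_4:
  assumes "0 < v" "v < \<bar>\<tau>\<bar>"
  shows "norm (integral {0..v} (critical_integrand \<tau>)) \<le> 4"
proof (cases "v \<le> 4")
  case True
  then have "2 * sqrt v - 2 * sqrt 0 \<le> 4"
    using real_sqrt_le_mono[OF True] by simp
  with assms show ?thesis
    using norm_integral_critical_le_sqrt[of 0 v \<tau>] by simp
next
  case False
  define x where "x = sqrt v"
  have x: "2 < x" "x\<^sup>2 = v"
    using False assms real_less_rsqrt[of 2 v] by (auto simp: x_def)
  define c where "c = (x - 1)\<^sup>2"
  have "sqrt c = x - 1"
    using x by (simp add: c_def)
  moreover have "v - c = 2 * x - 1"
    using x by (simp add: c_def power2_eq_square algebra_simps)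
  moreover have "0 < c"
    using x by (simp add: c_def)
  ultimately have c: "0 < c" "c \<le> v" "v - c = 2 * x - 1" "sqrt c = x - 1"
    using x by simp_all
  have "norm (integral {0..c} (critical_integrand \<tau>)) \<le> 2 * sqrt c / (\<bar>\<tau>\<bar> - c)"
    using c assms by (intro norm_integral_critical_from_zero_le) auto
  also have "\<dots> \<le> 2 * sqrt c / (v - c)"
    using c assms x by (intro divide_left_mono) auto
  also have "\<dots> \<le> 1"
    using c x by simp
  finally have head: "norm (integral {0..c} (critical_integrand \<tau>)) \<le> 1" .
  have tail: "norm (integral {c..v} (critical_integrand \<tau>)) \<le> 2"
    using norm_integral_critical_le_sqrt[of c v \<tau>] c by (simp add: x_def)
  have "integral {0..v} (critical_integrand \<tau>)
      = integral {0..c} (critical_integrand \<tau>) + integral {c..v} (critical_integrand \<tau>)"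
    using c by (intro integral_critical_combine) auto
  also have "norm \<dots> \<le> 4"
    using head tail by (intro norm_triangle_le) linarith
  finally show ?thesis .
qed

lemma norm_integral_critical_le_4:
  assumes "\<bar>\<tau>\<bar> < v" "v \<le> T"
  shows "norm (integral {v..T} (critical_integrand \<tau>)) \<le> 4"
proof -
  define x where "x = sqrt v"
  have x: "0 < x" "x\<^sup>2 = v"
    using assms by (auto simp: x_def)
  define c where "c = (x + 1)\<^sup>2"
  have "sqrt c = x + 1"
    using x by (simp add: c_def)
  moreover have "v \<le> c" "c - v = 2 * x + 1"
    using x by (simp_all add: c_def power2_eq_square algebra_simps)
  ultimately have c: "v \<le> c" "c - v = 2 * x + 1" "sqrt c = x + 1"
    by simp_all
  have crude: "norm (integral {v..t} (critical_integrand \<tau>)) \<le> 2" if "v \<le> t" "t \<le> c" for t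
  proof -
    have "norm (integral {v..t} (critical_integrand \<tau>)) \<le> 2 * sqrt t - 2 * sqrt v"
      using assms that by (intro norm_integral_critical_le_sqrt) auto
    also have "\<dots> \<le> 2 * sqrt c - 2 * sqrt v"
      using that by (simp add: real_sqrt_le_mono)
    finally show ?thesis
      using c by (simp add: x_def)
  qed
  show ?thesis
  proof (cases "T \<le> c")
    case True
    then show ?thesis
      using crude[OF assms(2)] by simp
  next
    case False
    have "norm (integral {c..T} (critical_integrand \<tau>)) \<le> 2 * sqrt c / (c - \<bar>\<tau>\<bar>)"
      using False assms c by (intro norm_integral_critical_le_above) auto
    also have "\<dots> \<le> 2 * sqrt c / (c - v)"
      using assms c x by (intro divide_left_mono) auto
    also have "\<dots> \<le> 2"
      using c x by (simp add: pos_divide_le_eq)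
    finally have "norm (integral {c..T} (critical_integrand \<tau>)) \<le> 2" .
    moreover have "integral {v..T} (critical_integrand \<tau>)
        = integral {v..c} (critical_integrand \<tau>) + integral {c..T} (critical_integrand \<tau>)"
      using assms c False by (intro integral_critical_combine) auto
    ultimately show ?thesis
      using crude[of c] c(1) by (simp add: norm_triangle_le)
  qed
qed

lemma convergent_integral_critical_at_top:
  assumes "\<bar>\<tau>\<bar> < v"
  shows "\<exists>L. ((\<lambda>T. integral {v..T} (critical_integrand \<tau>)) \<longlongrightarrow> L) at_top"
proof (rule convergent_integral_at_top)
  show "critical_integrand \<tau> integrable_on {v..T}" if "v \<le> T" for T
    using assms that by (intro critical_integrand_integrable) auto
  show "norm (integral {M..T} (critical_integrand \<tau>)) \<le> 2 * sqrt M / (M - \<bar>\<tau>\<bar>)"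
    if "v \<le> M" "M \<le> T" for M T
    using assms that by (intro norm_integral_critical_le_above) auto
  show "((\<lambda>M. 2 * sqrt M / (M - \<bar>\<tau>\<bar>)) \<longlongrightarrow> 0) at_top"
    by real_asymp
qed

theorem proposition8:
  fixes v \<tau> :: real
  assumes "v > 0"
  shows "(\<bar>\<tau>\<bar> > v \<longrightarrow>
            norm (lower_inc (1/2 + \<i> * of_real \<tau>) v) \<le> min 4 (2 * sqrt v / (\<bar>\<tau>\<bar> - v)))
       \<and> (\<bar>\<tau>\<bar> < v \<longrightarrow>
            norm (upper_inc (1/2 + \<i> * of_real \<tau>) v) \<le> min 4 (2 * sqrt v / (v - \<bar>\<tau>\<bar>)))"
proof (intro conjI impI)
  assume "\<bar>\<tau>\<bar> > v"
  then show "norm (lower_inc (1/2 + \<i> * of_real \<tau>) v) \<le> min 4 (2 * sqrt v / (\<bar>\<tau>\<bar> - v))"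
    unfolding lower_inc_def
    using assms norm_integral_critical_from_zero_le_4 norm_integral_critical_from_zero_le by simp
next
  assume "\<bar>\<tau>\<bar> < v"
  then obtain L where L: "((\<lambda>T. integral {v..T} (critical_integrand \<tau>)) \<longlongrightarrow> L) at_top"
    using convergent_integral_critical_at_top by blast
  then have "upper_inc (1/2 + \<i> * of_real \<tau>) v = L"
    unfolding upper_inc_def by (rule tendsto_Lim[OF trivial_limit_at_top_linorder])
  moreover have "norm L \<le> min 4 (2 * sqrt v / (v - \<bar>\<tau>\<bar>))"
  proof (rule Lim_norm_ubound[OF trivial_limit_at_top_linorder L])
    show "\<forall>\<^sub>F T in at_top. norm (integral {v..T} (critical_integrand \<tau>)) \<le> min 4 (2 * sqrt v / (v - \<bar>\<tau>\<bar>))"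
      using eventually_ge_at_top[of v]
      by eventually_elim
         (use \<open>\<bar>\<tau>\<bar> < v\<close> norm_integral_critical_le_4 norm_integral_critical_le_above in simp)
  qed
  ultimately show "norm (upper_inc (1/2 + \<i> * of_real \<tau>) v) \<le> min 4 (2 * sqrt v / (v - \<bar>\<tau>\<bar>))"
    by simp
qed

end
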